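(* For every pair of integers $n\ge 2$ and $1\le r\le n-1$, let $s:=\min\{r,n-r\}$. Then \[ \mathcal{K}^{\mathsf{TJ}}(J(n,r))= \begin{cases} \{k:k\ge 1\}, & s=1,\\ \{s\}, & s\ge 2\text{ and }n=2s,\\ \{s,n-s\}, & s\ge 2\text{ and }n>2s. \end{cases} \]
   Context: All graphs are finite, simple, undirected. A $k$-clique of a graph $H$ is a set of $k$ pairwise adjacent vertices. For a graph $H$ and integer $k\ge1$, the Token Jumping graph $\mathsf{TJ}_k(H)$ has as vertices the $k$-cliques of $H$, and two $k$-cliques $A,B$ are adjacent iff $|A\cap B|=k-1$. For a graph $G$, $\mathcal{K}^{\mathsf{TJ}}(G)=\{k\ge1:\ \exists\text{ a graph }H\text{ with }\mathsf{TJ}_k(H)\cong G\}$. The Johnson graph $J(n,r)$ has as vertices the $r$-subsets of $\{1,\dots,n\}$, two being adjacent iff their intersection has size $r-1$. *)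

theory Defs
  imports Main
begin

definition is_graph :: "'a set \<Rightarrow> 'a set set \<Rightarrow> bool" where
  "is_graph V E \<longleftrightarrow> finite V \<and> (\<forall>e\<in>E. e \<subseteq> V \<and> card e = 2)"

definition graph_iso :: "'a set \<Rightarrow> 'a set set \<Rightarrow> 'b set \<Rightarrow> 'b set set \<Rightarrow> bool" where
  "graph_iso V1 E1 V2 E2 \<longleftrightarrow>
     (\<exists>f. bij_betw f V1 V2 \<and> (\<forall>x\<in>V1. \<forall>y\<in>V1. {x, y} \<in> E1 \<longleftrightarrow> {f x, f y} \<in> E2))"

definition cliques :: "'a set \<Rightarrow> 'a set set \<Rightarrow> nat \<Rightarrow> 'a set set" where
  "cliques V E k = {A. A \<subseteq> V \<and> card A = k \<and> (\<forall>x\<in>A. \<forall>y\<in>A. x \<noteq> y \<longrightarrow> {x, y} \<in> E)}"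

definition TJ_V :: "'a set \<Rightarrow> 'a set set \<Rightarrow> nat \<Rightarrow> 'a set set" where
  "TJ_V V E k = cliques V E k"

definition TJ_E :: "'a set \<Rightarrow> 'a set set \<Rightarrow> nat \<Rightarrow> 'a set set set" where
  "TJ_E V E k = {{A, B} | A B. A \<in> cliques V E k \<and> B \<in> cliques V E k \<and> A \<noteq> B
                               \<and> card (A \<inter> B) = k - 1}"

text \<open>K^TJ(G). Host graphs H are taken on vertex type nat; every finite graph is
  isomorphic to one on nat vertices, so this is no loss.\<close>
definition K_TJ :: "'b set \<Rightarrow> 'b set set \<Rightarrow> nat set" where
  "K_TJ V E = {k. k \<ge> 1 \<and> (\<exists>(VH :: nat set) EH. is_graph VH EH \<and>
                    graph_iso (TJ_V VH EH k) (TJ_E VH EH k) V E)}"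

definition johnson_V :: "nat \<Rightarrow> nat \<Rightarrow> nat set set" where
  "johnson_V n r = {A. A \<subseteq> {1..n} \<and> card A = r}"

definition johnson_E :: "nat \<Rightarrow> nat \<Rightarrow> nat set set set" where
  "johnson_E n r = {{A, B} | A B. A \<in> johnson_V n r \<and> B \<in> johnson_V n r \<and> A \<noteq> B
                                 \<and> card (A \<inter> B) = r - 1}"

end

(*
  If r = 1 or r = n - 1, then J(n, r) is the complete graph K_n, and for every k it is
  TJ_k of the join of a clique on k - 1 vertices with n independent vertices, whose k-cliques are
  the clique plus one independent vertex. Otherwise 2 <= r <= n - 2; the values r and n - r are
  realised by K_n itself, since TJ_r(K_n) = J(n, r) is isomorphic to J(n, n - r) by complementation.

  Conversely, two adjacent k-cliques of a graph H have the form I + a and I + b. Their common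
  neighbours in TJ_k(H) are the cliques I + x with x new and the cliques I + a + b - y with y in I;
  each kind is a clique of TJ_k(H), and no edge joins the two kinds. If the common neighbourhood
  is not a clique, both kinds occur, so ab is an edge of H, so I + a + b is a clique and all k - 1
  sets I + a + b - y are k-cliques: some closed neighbourhood within the common neighbourhood has
  exactly k - 1 elements. In J(n, r) the analogous sizes are r - 1 and n - r - 1, and both kinds
  occur. Comparing these isomorphism invariants gives k - 1 in {r - 1, n - r - 1}.
*)

theory Submission
  imports Defs
begin

definition jump_adj :: "nat \<Rightarrow> 'a set \<Rightarrow> 'a set \<Rightarrow> bool" where
  "jump_adj k A B \<longleftrightarrow> A \<noteq> B \<and> card (A \<inter> B) = k - 1"

lemma jump_adj_sym: "jump_adj k A B \<Longrightarrow> jump_adj k B A"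
  unfolding jump_adj_def by (auto simp: Int_commute)

lemma symp_jump_adj: "symp (jump_adj k)"
  by (auto intro: sympI jump_adj_sym)

lemma jump_adj_insert_insert:
  assumes "finite I" "x \<notin> I" "x' \<notin> I"
  shows "jump_adj (card I + 1) (insert x I) (insert x' I) \<longleftrightarrow> x \<noteq> x'"
proof (cases "x = x'")
  case False
  then have "insert x I \<inter> insert x' I = I" "insert x I \<noteq> insert x' I"
    using assms by auto
  then show ?thesis using False by (simp add: jump_adj_def)
qed (simp add: jump_adj_def)

lemma jump_adj_remove_remove:
  assumes "finite X" "y \<in> X" "y' \<in> X"
  shows "jump_adj (card X - 1) (X - {y}) (X - {y'}) \<longleftrightarrow> y \<noteq> y'"
proof (cases "y = y'")
  case False
  then have "(X - {y}) \<inter> (X - {y'}) = X - {y, y'}" "X - {y} \<noteq> X - {y'}"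
    using assms by auto
  moreover have "card (X - {y, y'}) = card X - 2"
    using assms False by (simp add: card_Diff_subset)
  ultimately show ?thesis using False by (simp add: jump_adj_def)
qed (simp add: jump_adj_def)

lemma cliques_subset: "X \<in> cliques V E k \<Longrightarrow> Y \<subseteq> X \<Longrightarrow> Y \<in> cliques V E (card Y)"
  unfolding cliques_def by blast

lemma cliques_complete: "cliques V {e. e \<subseteq> V \<and> card e = 2} k = {A. A \<subseteq> V \<and> card A = k}"
  unfolding cliques_def by (auto simp: card_2_iff)

lemma is_graph_complete: "finite V \<Longrightarrow> is_graph V {e. e \<subseteq> V \<and> card e = 2}"
  unfolding is_graph_def by auto

lemma cliques_join:
  assumes "finite K" "S \<inter> K = {}"
  shows "cliques (S \<union> K) {e. e \<subseteq> S \<union> K \<and> card e = 2 \<and> e \<inter> K \<noteq> {}} (card K + 1)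
         = (\<lambda>i. insert i K) ` S"
    (is "cliques _ ?E _ = _")
proof (intro antisym subsetI)
  fix D assume "D \<in> cliques (S \<union> K) ?E (card K + 1)"
  then have D: "D \<subseteq> S \<union> K" "card D = card K + 1"
    and edges: "\<And>x y. x \<in> D \<Longrightarrow> y \<in> D \<Longrightarrow> x \<noteq> y \<Longrightarrow> {x, y} \<inter> K \<noteq> {}"
    unfolding cliques_def by auto
  have fin: "finite D" using D(2) card_ge_0_finite by force
  have "card (D - K) \<le> 1"
    using edges fin by (auto simp: card_le_Suc0_iff_eq)
  moreover have "card (D - K) = card D - card (D \<inter> K)"
    using fin by (simp add: card_Diff_subset_Int)
  moreover have "card (D \<inter> K) \<le> card K"
    using assms(1) by (simp add: card_mono)
  ultimately have "card (D - K) = 1" "card (D \<inter> K) = card K"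
    using D(2) by linarith+
  then have "K \<subseteq> D" and "\<exists>i. D - K = {i}"
    using assms(1) card_subset_eq[of K "D \<inter> K"] card_1_singleton_iff by auto
  then obtain i where "D = insert i K" "i \<in> S"
    using D(1) by blast
  then show "D \<in> (\<lambda>i. insert i K) ` S" by blast
next
  fix D assume "D \<in> (\<lambda>i. insert i K) ` S"
  then obtain i where i: "i \<in> S" "i \<notin> K" "D = insert i K" using assms(2) by blast
  have "{x, y} \<in> ?E" if "x \<in> D" "y \<in> D" "x \<noteq> y" for x y
    using that i by auto
  then show "D \<in> cliques (S \<union> K) ?E (card K + 1)"
    using i assms(1) unfolding cliques_def by auto
qed

definition rel_iso ::
    "('a \<Rightarrow> 'b) \<Rightarrow> 'a set \<Rightarrow> ('a \<Rightarrow> 'a \<Rightarrow> bool) \<Rightarrow> 'b set \<Rightarrow> ('b \<Rightarrow> 'b \<Rightarrow> bool) \<Rightarrow> bool" where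
  "rel_iso f W R W' R' \<longleftrightarrow> bij_betw f W W' \<and> (\<forall>x\<in>W. \<forall>y\<in>W. R x y \<longleftrightarrow> R' (f x) (f y))"

lemma rel_isoD:
  assumes "rel_iso f W R W' R'"
  shows "bij_betw f W W'" and "x \<in> W \<Longrightarrow> y \<in> W \<Longrightarrow> R' (f x) (f y) \<longleftrightarrow> R x y"
    and "x \<in> W \<Longrightarrow> y \<in> W \<Longrightarrow> f x = f y \<longleftrightarrow> x = y"
  using assms unfolding rel_iso_def bij_betw_def by (auto dest: inj_onD)

lemma rel_iso_inv:
  assumes "rel_iso f W R W' R'"
  shows "rel_iso (inv_into W f) W' R' W R"
proof -
  have bij: "bij_betw f W W'" and pres: "\<forall>x\<in>W. \<forall>y\<in>W. R x y \<longleftrightarrow> R' (f x) (f y)"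
    using assms unfolding rel_iso_def by auto
  have bij_inv: "bij_betw (inv_into W f) W' W"
    using bij by (rule bij_betw_inv_into)
  have "R' x y \<longleftrightarrow> R (inv_into W f x) (inv_into W f y)" if "x \<in> W'" "y \<in> W'" for x y
    using pres that bij_betw_apply[OF bij_inv] bij_betw_inv_into_right[OF bij] by metis
  with bij_inv show ?thesis unfolding rel_iso_def by blast
qed

lemma rel_iso_comp:
  assumes "rel_iso f W R W' R'" "rel_iso g W' R' W'' R''"
  shows "rel_iso (g \<circ> f) W R W'' R''"
proof -
  have "bij_betw f W W'" "bij_betw g W' W''"
    using assms unfolding rel_iso_def by auto
  moreover have "R x y \<longleftrightarrow> R'' (g (f x)) (g (f y))" if "x \<in> W" "y \<in> W" for x y
    using assms that bij_betw_apply[OF \<open>bij_betw f W W'\<close>] unfolding rel_iso_def by simp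
  ultimately show ?thesis unfolding rel_iso_def by (auto intro: bij_betw_trans)
qed

lemma rel_iso_image:
  assumes "inj_on g S" "inj_on h S"
    and "\<And>i j. i \<in> S \<Longrightarrow> j \<in> S \<Longrightarrow> R (g i) (g j) \<longleftrightarrow> R' (h i) (h j)"
  shows "rel_iso (h \<circ> inv_into S g) (g ` S) R (h ` S) R'"
proof -
  have "bij_betw (inv_into S g) (g ` S) S" "bij_betw h S (h ` S)"
    using assms(1,2) by (simp_all add: bij_betw_inv_into inj_on_imp_bij_betw)
  then have "bij_betw (h \<circ> inv_into S g) (g ` S) (h ` S)"
    by (rule bij_betw_trans)
  moreover have "R x y \<longleftrightarrow> R' (h (inv_into S g x)) (h (inv_into S g y))"
    if "x \<in> g ` S" "y \<in> g ` S" for x y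
    using that assms by (auto simp: inv_into_f_f)
  ultimately show ?thesis unfolding rel_iso_def by simp
qed

definition rel_edges :: "('a \<Rightarrow> 'a \<Rightarrow> bool) \<Rightarrow> 'a set \<Rightarrow> 'a set set" where
  "rel_edges R W = {{u, v} | u v. u \<in> W \<and> v \<in> W \<and> R u v}"

lemma doubleton_in_rel_edges_iff:
  assumes "symp R" "x \<in> W" "y \<in> W"
  shows "{x, y} \<in> rel_edges R W \<longleftrightarrow> R x y"
  using assms unfolding rel_edges_def by (auto simp: doubleton_eq_iff dest: sympD)

lemma graph_iso_rel_edges_iff:
  assumes "symp R" "symp R'"
  shows "graph_iso W (rel_edges R W) W' (rel_edges R' W') \<longleftrightarrow> (\<exists>f. rel_iso f W R W' R')"
proof -
  have "({x, y} \<in> rel_edges R W \<longleftrightarrow> {f x, f y} \<in> rel_edges R' W')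
        \<longleftrightarrow> (R x y \<longleftrightarrow> R' (f x) (f y))"
    if "bij_betw f W W'" "x \<in> W" "y \<in> W" for f x y
    using assms that(2,3) bij_betw_apply[OF that(1)] by (simp add: doubleton_in_rel_edges_iff)
  then show ?thesis unfolding graph_iso_def rel_iso_def by blast
qed

section \<open>An isomorphism invariant\<close>

definition rel_clique :: "('a \<Rightarrow> 'a \<Rightarrow> bool) \<Rightarrow> 'a set \<Rightarrow> bool" where
  "rel_clique R X \<longleftrightarrow> (\<forall>x\<in>X. \<forall>y\<in>X. x \<noteq> y \<longrightarrow> R x y)"

lemma rel_cliqueD: "rel_clique R X \<Longrightarrow> x \<in> X \<Longrightarrow> y \<in> X \<Longrightarrow> x \<noteq> y \<Longrightarrow> R x y"
  unfolding rel_clique_def by blast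

definition common_nbrs :: "('a \<Rightarrow> 'a \<Rightarrow> bool) \<Rightarrow> 'a set \<Rightarrow> 'a \<Rightarrow> 'a \<Rightarrow> 'a set" where
  "common_nbrs R W A B = {D \<in> W. R A D \<and> R B D}"

definition common_closed_nbhd :: "('a \<Rightarrow> 'a \<Rightarrow> bool) \<Rightarrow> 'a set \<Rightarrow> 'a \<Rightarrow> 'a \<Rightarrow> 'a \<Rightarrow> 'a set" where
  "common_closed_nbhd R W A B C = {D \<in> W. R A D \<and> R B D \<and> (D = C \<or> R C D)}"

definition edge_class_sizes :: "('a \<Rightarrow> 'a \<Rightarrow> bool) \<Rightarrow> 'a set \<Rightarrow> nat set" where
  "edge_class_sizes R W = {card (common_closed_nbhd R W A B C) | A B C.
     A \<in> W \<and> B \<in> W \<and> R A B \<and> \<not> rel_clique R (common_nbrs R W A B) \<and> C \<in> common_nbrs R W A B}"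

lemma edge_class_sizesI:
  assumes "A \<in> W" "B \<in> W" "R A B" "\<not> rel_clique R (common_nbrs R W A B)"
    and "C \<in> common_nbrs R W A B"
  shows "card (common_closed_nbhd R W A B C) \<in> edge_class_sizes R W"
  using assms unfolding edge_class_sizes_def by blast

lemma rel_iso_common_nbrs:
  assumes "rel_iso f W R W' R'" "A \<in> W" "B \<in> W"
  shows "bij_betw f (common_nbrs R W A B) (common_nbrs R' W' (f A) (f B))"
  unfolding common_nbrs_def
  by (rule bij_betw_Collect[OF rel_isoD(1)[OF assms(1)]]) (simp add: rel_isoD(2)[OF assms(1)] assms)

lemma rel_iso_common_closed_nbhd:
  assumes "rel_iso f W R W' R'" "A \<in> W" "B \<in> W" "C \<in> W"
  shows "bij_betw f (common_closed_nbhd R W A B C) (common_closed_nbhd R' W' (f A) (f B) (f C))"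
  unfolding common_closed_nbhd_def
  by (rule bij_betw_Collect[OF rel_isoD(1)[OF assms(1)]])
    (simp add: rel_isoD(2,3)[OF assms(1)] assms)

lemma rel_iso_rel_clique:
  assumes "rel_iso f W R W' R'" "X \<subseteq> W"
  shows "rel_clique R' (f ` X) \<longleftrightarrow> rel_clique R X"
proof -
  have "(f x \<noteq> f y \<longrightarrow> R' (f x) (f y)) \<longleftrightarrow> (x \<noteq> y \<longrightarrow> R x y)" if "x \<in> X" "y \<in> X" for x y
    using that assms(2) rel_isoD(2,3)[OF assms(1)] by blast
  then show ?thesis unfolding rel_clique_def by simp
qed

lemma rel_iso_edge_class_sizes_subset:
  assumes iso: "rel_iso f W R W' R'"
  shows "edge_class_sizes R W \<subseteq> edge_class_sizes R' W'"
proof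
  fix m assume "m \<in> edge_class_sizes R W"
  then obtain A B C where AB: "A \<in> W" "B \<in> W" "R A B"
    and nonclique: "\<not> rel_clique R (common_nbrs R W A B)"
    and C: "C \<in> common_nbrs R W A B" and m: "m = card (common_closed_nbhd R W A B C)"
    unfolding edge_class_sizes_def by blast
  have "common_nbrs R W A B \<subseteq> W" unfolding common_nbrs_def by blast
  note common = rel_iso_common_nbrs[OF iso AB(1,2)]
  have "\<not> rel_clique R' (common_nbrs R' W' (f A) (f B))"
    using nonclique rel_iso_rel_clique[OF iso \<open>common_nbrs R W A B \<subseteq> W\<close>]
      bij_betw_imp_surj_on[OF common] by simp
  moreover have "f C \<in> common_nbrs R' W' (f A) (f B)"
    using bij_betw_apply[OF common C] .
  moreover have "f A \<in> W'" "f B \<in> W'" "R' (f A) (f B)"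
    using AB bij_betw_apply[OF rel_isoD(1)[OF iso]] rel_isoD(2)[OF iso] by auto
  ultimately have "card (common_closed_nbhd R' W' (f A) (f B) (f C)) \<in> edge_class_sizes R' W'"
    by (intro edge_class_sizesI)
  moreover have "C \<in> W" using C unfolding common_nbrs_def by blast
  ultimately show "m \<in> edge_class_sizes R' W'"
    using m bij_betw_same_card[OF rel_iso_common_closed_nbhd[OF iso AB(1,2)]] by simp
qed

lemma rel_iso_edge_class_sizes:
  assumes "rel_iso f W R W' R'"
  shows "edge_class_sizes R W = edge_class_sizes R' W'"
  using rel_iso_edge_class_sizes_subset[OF assms]
    rel_iso_edge_class_sizes_subset[OF rel_iso_inv[OF assms]] by blast

section \<open>Common neighbours of two adjacent sets\<close>

locale jump_pair =
  fixes a b :: 'a and I :: "'a set" and k :: nat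
  assumes a_notin: "a \<notin> I" and b_notin: "b \<notin> I" and a_neq_b: "a \<noteq> b"
    and finite_I: "finite I" and card_I: "card I + 1 = k"
begin

abbreviation U :: "'a set" where
  "U \<equiv> insert a (insert b I)"

definition core_nbrs :: "'a set set \<Rightarrow> 'a set set" where
  "core_nbrs W = W \<inter> (\<lambda>x. insert x I) ` (- U)"

definition pair_nbrs :: "'a set set \<Rightarrow> 'a set set" where
  "pair_nbrs W = W \<inter> (\<lambda>y. U - {y}) ` I"

lemma card_U: "card U = k + 1"
  using a_notin b_notin a_neq_b finite_I card_I by simp

lemma card_insert_core: "x \<notin> I \<Longrightarrow> card (insert x I) = k"
  using finite_I card_I by simp

lemma card_U_remove: "y \<in> I \<Longrightarrow> card (U - {y}) = k"
  using card_U finite_I by (simp add: card_Diff_singleton)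

lemma jump_adj_core: "x \<notin> I \<Longrightarrow> x' \<notin> I \<Longrightarrow> jump_adj k (insert x I) (insert x' I) \<longleftrightarrow> x \<noteq> x'"
  using jump_adj_insert_insert[OF finite_I] card_I by simp

lemma jump_adj_pair: "y \<in> I \<Longrightarrow> y' \<in> I \<Longrightarrow> jump_adj k (U - {y}) (U - {y'}) \<longleftrightarrow> y \<noteq> y'"
  using jump_adj_remove_remove[of U y y'] finite_I card_U by simp

lemma core_neq_pair: "x \<notin> U \<Longrightarrow> y \<in> I \<Longrightarrow> insert x I \<noteq> U - {y}"
  using a_neq_b b_notin by auto

lemma not_jump_adj_core_pair:
  assumes "x \<notin> U" "y \<in> I"
  shows "\<not> jump_adj k (insert x I) (U - {y})"
proof -
  have "insert x I \<inter> (U - {y}) = I - {y}"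
    using assms by auto
  moreover have "card (I - {y}) = k - 2" and "2 \<le> k"
    using assms finite_I card_I by (auto simp: card_Diff_singleton Suc_le_eq card_gt_0_iff)
  moreover have "k - 2 \<noteq> k - 1" using \<open>2 \<le> k\<close> by arith
  ultimately show ?thesis unfolding jump_adj_def by simp
qed

lemma jump_adj_to_pair:
  assumes "y \<in> I"
  shows "jump_adj k (insert a I) (U - {y})" "jump_adj k (insert b I) (U - {y})"
proof -
  have "insert a I \<inter> (U - {y}) = insert a I - {y}" "insert b I \<inter> (U - {y}) = insert b I - {y}"
    using assms by auto
  moreover have "card (insert a I - {y}) = k - 1" "card (insert b I - {y}) = k - 1"
    using assms a_notin b_notin finite_I card_I by (auto simp: card_Diff_singleton)
  moreover have "insert a I \<noteq> U - {y}" "insert b I \<noteq> U - {y}"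
    using assms a_notin b_notin a_neq_b by auto
  ultimately show "jump_adj k (insert a I) (U - {y})" "jump_adj k (insert b I) (U - {y})"
    unfolding jump_adj_def by auto
qed

lemma common_nbr_cases:
  assumes D: "card D = k" "jump_adj k (insert a I) D" "jump_adj k (insert b I) D"
  shows "(\<exists>x. x \<notin> U \<and> D = insert x I) \<or> (\<exists>y\<in>I. D = U - {y})"
proof (cases "I \<subseteq> D")
  case True
  have fin_D: "finite D" using D(1) card_I card_ge_0_finite by force
  have "z \<notin> D" if "z \<in> {a, b}" for z
  proof
    assume "z \<in> D"
    then have "insert z I = D"
      using True fin_D D(1) that a_notin b_notin finite_I card_I by (intro card_subset_eq) auto
    then show False using D(2,3) that unfolding jump_adj_def by auto
  qed
  moreover have "card (D - I) = 1"
    using True fin_D D(1) finite_I card_I by (simp add: card_Diff_subset)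
  then obtain x where "D - I = {x}" by (rule card_1_singletonE)
  ultimately show ?thesis using True by blast
next
  case False
  then obtain y where y: "y \<in> I" "y \<notin> D" by auto
  have fin_D: "finite D" using D(1) card_I card_ge_0_finite by force
  have "z \<in> D" if "z \<in> insert c I" "z \<noteq> y" "c \<in> {a, b}" for z c
  proof -
    have "c \<notin> I" using that(3) a_notin b_notin by auto
    then have "card (insert c I \<inter> D) = card (insert c I - {y})"
      using D(2,3) that(3) y(1) finite_I card_I unfolding jump_adj_def
      by (auto simp: card_Diff_singleton)
    then have "insert c I \<inter> D = insert c I - {y}"
      using y(2) finite_I by (intro card_subset_eq) auto
    then show ?thesis using that by blast
  qed
  then have "U - {y} \<subseteq> D" by blast
  moreover have "card (U - {y}) = card D"
    using y(1) card_U D(1) by (simp add: card_Diff_singleton)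
  ultimately have "U - {y} = D" using card_subset_eq[OF fin_D] by blast
  then show ?thesis using y(1) by blast
qed

lemma common_nbrs_eq:
  assumes "\<forall>D\<in>W. card D = k"
  shows "common_nbrs (jump_adj k) W (insert a I) (insert b I) = core_nbrs W \<union> pair_nbrs W"
proof
  show "common_nbrs (jump_adj k) W (insert a I) (insert b I) \<subseteq> core_nbrs W \<union> pair_nbrs W"
    using common_nbr_cases assms unfolding common_nbrs_def core_nbrs_def pair_nbrs_def by fastforce
  have "jump_adj k (insert a I) (insert x I)" "jump_adj k (insert b I) (insert x I)" if "x \<notin> U" for x
    using that a_notin b_notin jump_adj_core by auto
  then show "core_nbrs W \<union> pair_nbrs W \<subseteq> common_nbrs (jump_adj k) W (insert a I) (insert b I)"
    using jump_adj_to_pair unfolding common_nbrs_def core_nbrs_def pair_nbrs_def by auto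
qed

lemma common_closed_nbhd_core:
  assumes W: "\<forall>D\<in>W. card D = k" and C: "C \<in> core_nbrs W"
  shows "common_closed_nbhd (jump_adj k) W (insert a I) (insert b I) C = core_nbrs W"
proof -
  obtain x where x: "x \<notin> U" "C = insert x I" using C unfolding core_nbrs_def by blast
  have "D = C \<or> jump_adj k C D \<longleftrightarrow> D \<in> core_nbrs W" if "D \<in> core_nbrs W \<union> pair_nbrs W" for D
    using that x jump_adj_core core_neq_pair not_jump_adj_core_pair
    unfolding core_nbrs_def pair_nbrs_def by auto
  then show ?thesis
    using common_nbrs_eq[OF W] unfolding common_nbrs_def common_closed_nbhd_def by blast
qed

lemma common_closed_nbhd_pair:
  assumes W: "\<forall>D\<in>W. card D = k" and C: "C \<in> pair_nbrs W"
  shows "common_closed_nbhd (jump_adj k) W (insert a I) (insert b I) C = pair_nbrs W"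
proof -
  obtain y where y: "y \<in> I" "C = U - {y}" using C unfolding pair_nbrs_def by blast
  have "\<not> jump_adj k (U - {y}) (insert x I)" if "x \<notin> U" for x
    using not_jump_adj_core_pair[OF that y(1)] jump_adj_sym by blast
  then have "D = C \<or> jump_adj k C D \<longleftrightarrow> D \<in> pair_nbrs W" if "D \<in> core_nbrs W \<union> pair_nbrs W" for D
    using that y jump_adj_pair core_neq_pair
    unfolding core_nbrs_def pair_nbrs_def by auto
  then show ?thesis
    using common_nbrs_eq[OF W] unfolding common_nbrs_def common_closed_nbhd_def by blast
qed

lemma rel_clique_common_nbrs_iff:
  assumes W: "\<forall>D\<in>W. card D = k"
  shows "rel_clique (jump_adj k) (common_nbrs (jump_adj k) W (insert a I) (insert b I))
         \<longleftrightarrow> core_nbrs W = {} \<or> pair_nbrs W = {}"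
proof
  assume clique: "rel_clique (jump_adj k) (common_nbrs (jump_adj k) W (insert a I) (insert b I))"
  show "core_nbrs W = {} \<or> pair_nbrs W = {}"
  proof (rule ccontr)
    assume "\<not> ?thesis"
    then obtain x y where x: "x \<notin> U" "insert x I \<in> core_nbrs W"
      and y: "y \<in> I" "U - {y} \<in> pair_nbrs W"
      unfolding core_nbrs_def pair_nbrs_def by blast
    have "insert x I \<in> common_nbrs (jump_adj k) W (insert a I) (insert b I)"
      "U - {y} \<in> common_nbrs (jump_adj k) W (insert a I) (insert b I)"
      unfolding common_nbrs_eq[OF W] using x(2) y(2) by blast+
    from rel_cliqueD[OF clique this core_neq_pair[OF x(1) y(1)]]
    show False using not_jump_adj_core_pair[OF x(1) y(1)] by contradiction
  qed
next
  have "rel_clique (jump_adj k) (core_nbrs W)"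
    unfolding rel_clique_def core_nbrs_def using jump_adj_core by auto
  moreover have "rel_clique (jump_adj k) (pair_nbrs W)"
    unfolding rel_clique_def pair_nbrs_def using jump_adj_pair by auto
  ultimately show "core_nbrs W = {} \<or> pair_nbrs W = {} \<Longrightarrow>
      rel_clique (jump_adj k) (common_nbrs (jump_adj k) W (insert a I) (insert b I))"
    unfolding common_nbrs_eq[OF W] by auto
qed

lemma card_pair_nbrs:
  assumes "(\<lambda>y. U - {y}) ` I \<subseteq> W"
  shows "card (pair_nbrs W) = k - 1"
proof -
  have "pair_nbrs W = (\<lambda>y. U - {y}) ` I"
    using assms unfolding pair_nbrs_def by blast
  moreover have "inj_on (\<lambda>y. U - {y}) I"
    by (auto simp: inj_on_def)
  ultimately show ?thesis using card_image card_I by fastforce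
qed

lemma U_in_cliques:
  assumes "insert a I \<in> cliques V E k" "insert b I \<in> cliques V E k" "{a, b} \<in> E"
  shows "U \<in> cliques V E (k + 1)"
  using assms card_U unfolding cliques_def by (auto simp: insert_commute)

end

lemma obtain_jump_pair:
  assumes "jump_adj k A B" "card A = k" "card B = k" "1 \<le> k"
  obtains a b I where "jump_pair a b I k" "A = insert a I" "B = insert b I"
proof -
  have fin: "finite A" "finite B" using assms(2-4) card_ge_0_finite by force+
  have card_Int: "card (A \<inter> B) = k - 1" using assms(1) unfolding jump_adj_def by simp
  have "card (A - B) = 1" "card (B - A) = 1"
    using fin card_Int assms(2-4) by (simp_all add: card_Diff_subset_Int Int_commute)
  then obtain a b where a: "A - B = {a}" and b: "B - A = {b}" by (meson card_1_singletonE)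
  have "jump_pair a b (A \<inter> B) k"
    using a b fin card_Int assms(4) by unfold_locales auto
  moreover have "A = insert a (A \<inter> B)" "B = insert b (A \<inter> B)" using a b by blast+
  ultimately show ?thesis by (rule that)
qed

lemma edge_class_sizes_cliques:
  assumes "1 \<le> k" and "edge_class_sizes (jump_adj k) (cliques V E k) \<noteq> {}"
  shows "k - 1 \<in> edge_class_sizes (jump_adj k) (cliques V E k)"
proof -
  let ?W = "cliques V E k"
  obtain A B where AB: "A \<in> ?W" "B \<in> ?W" "jump_adj k A B"
    and nonclique: "\<not> rel_clique (jump_adj k) (common_nbrs (jump_adj k) ?W A B)"
    using assms(2) unfolding edge_class_sizes_def by blast
  have card_W: "\<forall>D\<in>?W. card D = k" by (simp add: cliques_def)
  obtain a b I where pair: "jump_pair a b I k" and A: "A = insert a I" and B: "B = insert b I"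
    using obtain_jump_pair[OF AB(3)] AB(1,2) card_W assms(1) by blast
  interpret jump_pair a b I k by (fact pair)
  obtain y where y: "y \<in> I" "U - {y} \<in> ?W"
    using rel_clique_common_nbrs_iff[OF card_W] nonclique unfolding A B pair_nbrs_def by blast
  have "{a, b} \<in> E"
    using y a_neq_b a_notin b_notin unfolding cliques_def by auto
  then have U_clique: "U \<in> cliques V E (k + 1)"
    using U_in_cliques AB(1,2) unfolding A B by blast
  have "(\<lambda>y. U - {y}) ` I \<subseteq> ?W"
  proof (rule image_subsetI)
    fix y' assume "y' \<in> I"
    have "U - {y'} \<in> cliques V E (card (U - {y'}))"
      by (rule cliques_subset[OF U_clique]) blast
    then show "U - {y'} \<in> ?W" unfolding card_U_remove[OF \<open>y' \<in> I\<close>] .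
  qed
  then have "card (common_closed_nbhd (jump_adj k) ?W A B (U - {y})) = k - 1"
    using common_closed_nbhd_pair[OF card_W] card_pair_nbrs y unfolding A B pair_nbrs_def by auto
  moreover have "U - {y} \<in> common_nbrs (jump_adj k) ?W A B"
    using common_nbrs_eq[OF card_W] y unfolding A B pair_nbrs_def by auto
  ultimately show ?thesis
    using edge_class_sizesI[OF AB nonclique] by metis
qed

section \<open>Johnson graphs\<close>

lemma johnson_V_eq_cliques: "johnson_V n r = cliques {1..n} {e. e \<subseteq> {1..n} \<and> card e = 2} r"
  unfolding johnson_V_def cliques_complete ..

lemma K_TJ_johnson_iff:
  "k \<in> K_TJ (johnson_V n r) (johnson_E n r) \<longleftrightarrow>
   1 \<le> k \<and> (\<exists>(V :: nat set) E f. is_graph V E \<and>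
     rel_iso f (cliques V E k) (jump_adj k) (johnson_V n r) (jump_adj r))"
proof -
  have "TJ_E V E k = rel_edges (jump_adj k) (cliques V E k)" for V :: "nat set" and E
    unfolding TJ_E_def rel_edges_def jump_adj_def ..
  moreover have "johnson_E n r = rel_edges (jump_adj r) (johnson_V n r)"
    unfolding johnson_E_def rel_edges_def jump_adj_def ..
  ultimately show ?thesis
    unfolding K_TJ_def TJ_V_def by (simp add: graph_iso_rel_edges_iff symp_jump_adj)
qed

lemma self_in_K_TJ_johnson:
  assumes "1 \<le> r"
  shows "r \<in> K_TJ (johnson_V n r) (johnson_E n r)"
proof -
  let ?E = "{e. e \<subseteq> {1..n} \<and> card e = 2}"
  have "is_graph {1..n} ?E"
    by (simp add: is_graph_complete)
  moreover have "rel_iso id (cliques {1..n} ?E r) (jump_adj r) (johnson_V n r) (jump_adj r)"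
    unfolding rel_iso_def johnson_V_eq_cliques by simp
  ultimately show ?thesis
    unfolding K_TJ_johnson_iff using assms by blast
qed

lemma rel_iso_johnson_complement:
  assumes "r \<le> n"
  shows "rel_iso (\<lambda>X. {1..n} - X) (johnson_V n r) (jump_adj r) (johnson_V n (n - r)) (jump_adj (n - r))"
proof -
  let ?c = "\<lambda>X. {1..n} - X"
  have card_c: "card (?c X) = n - card X" if "X \<subseteq> {1..n}" for X :: "nat set"
    using that by (simp add: card_Diff_subset finite_subset)
  have c_in: "?c X \<in> johnson_V n (n - m)" if "X \<in> johnson_V n m" for X m
    using that card_c unfolding johnson_V_def by auto
  have "bij_betw ?c (johnson_V n r) (johnson_V n (n - r))"
  proof (rule bij_betw_byWitness[where f' = ?c])
    show "?c ` johnson_V n (n - r) \<subseteq> johnson_V n r"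
      using c_in[of _ "n - r"] assms by auto
  qed (use c_in in \<open>auto simp: johnson_V_def\<close>)
  moreover have "jump_adj r X Y \<longleftrightarrow> jump_adj (n - r) (?c X) (?c Y)"
    if "X \<in> johnson_V n r" "Y \<in> johnson_V n r" for X Y
  proof -
    have X: "X \<subseteq> {1..n}" "card X = r" and Y: "Y \<subseteq> {1..n}" "card Y = r"
      using that unfolding johnson_V_def by auto
    have fin: "finite X" "finite Y" using X Y finite_subset by auto
    have "card (X \<inter> Y) = r - 1 \<longleftrightarrow> card (?c X \<inter> ?c Y) = n - r - 1" if "X \<noteq> Y"
    proof -
      have "card (X \<inter> Y) < r"
        using X Y fin that by (metis Int_lower1 Int_lower2 card_mono card_subset_eq le_neq_implies_less)
      moreover have "card (?c X \<inter> ?c Y) = n - card (X \<union> Y)"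
        using X Y card_c[of "X \<union> Y"] by (simp add: Diff_Un[symmetric])
      moreover have "card (X \<union> Y) + card (X \<inter> Y) = r + r"
        using card_Un_Int[OF fin] X Y by simp
      moreover have "card (X \<union> Y) \<le> n"
        using X Y card_mono[of "{1..n}" "X \<union> Y"] by simp
      ultimately show ?thesis by linarith
    qed
    moreover have "X \<noteq> Y \<longleftrightarrow> ?c X \<noteq> ?c Y" using X Y by blast
    ultimately show ?thesis unfolding jump_adj_def by blast
  qed
  ultimately show ?thesis unfolding rel_iso_def by blast
qed

lemma K_TJ_johnson_complement:
  assumes "r \<le> n"
  shows "K_TJ (johnson_V n (n - r)) (johnson_E n (n - r)) = K_TJ (johnson_V n r) (johnson_E n r)"
proof -
  have mono: "K_TJ (johnson_V n q) (johnson_E n q) \<subseteq> K_TJ (johnson_V n (n - q)) (johnson_E n (n - q))"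
    if "q \<le> n" for q
  proof
    fix k assume "k \<in> K_TJ (johnson_V n q) (johnson_E n q)"
    then obtain V :: "nat set" and E f where "1 \<le> k" "is_graph V E"
      and iso: "rel_iso f (cliques V E k) (jump_adj k) (johnson_V n q) (jump_adj q)"
      unfolding K_TJ_johnson_iff by blast
    with rel_iso_comp[OF iso rel_iso_johnson_complement[OF that]]
    show "k \<in> K_TJ (johnson_V n (n - q)) (johnson_E n (n - q))"
      unfolding K_TJ_johnson_iff by blast
  qed
  show ?thesis using mono[of r] mono[of "n - r"] assms by simp
qed

lemma K_TJ_johnson_1: "K_TJ (johnson_V n 1) (johnson_E n 1) = {k. 1 \<le> k}"
proof (intro antisym subsetI)
  fix k assume "k \<in> K_TJ (johnson_V n 1) (johnson_E n 1)"
  then show "k \<in> {k. 1 \<le> k}" unfolding K_TJ_def by simp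
next
  fix k :: nat assume "k \<in> {k. 1 \<le> k}"
  define K where "K = {n + 1..<n + k}"
  define V where "V = {1..n} \<union> K"
  define E where "E = {e. e \<subseteq> V \<and> card e = 2 \<and> e \<inter> K \<noteq> {}}"
  have K: "finite K" "{1..n} \<inter> K = {}" "card K + 1 = k"
    using \<open>k \<in> {k. 1 \<le> k}\<close> unfolding K_def by auto
  have "is_graph V E"
    unfolding is_graph_def V_def E_def K_def by auto
  have cliques_eq: "cliques V E k = (\<lambda>i. insert i K) ` {1..n}"
    using cliques_join[OF K(1,2)] unfolding V_def E_def K(3) .
  have johnson_eq: "johnson_V n 1 = (\<lambda>i. {i}) ` {1..n}"
    unfolding johnson_V_def by (auto simp: card_1_singleton_iff)
  have "rel_iso ((\<lambda>i. {i}) \<circ> inv_into {1..n} (\<lambda>i. insert i K))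
      (cliques V E k) (jump_adj k) (johnson_V n 1) (jump_adj 1)"
    unfolding cliques_eq johnson_eq
  proof (rule rel_iso_image)
    show "inj_on (\<lambda>i. insert i K) {1..n}" "inj_on (\<lambda>i. {i}) {1..n}"
      using K(2) unfolding inj_on_def by blast+
    show "jump_adj k (insert i K) (insert j K) \<longleftrightarrow> jump_adj 1 {i} {j}"
      if "i \<in> {1..n}" "j \<in> {1..n}" for i j
    proof -
      have "i \<notin> K" "j \<notin> K" using K(2) that by blast+
      then show ?thesis
        using jump_adj_insert_insert[of K i j] jump_adj_insert_insert[of "{}" i j] K(1,3) by simp
    qed
  qed
  with \<open>is_graph V E\<close> \<open>k \<in> {k. 1 \<le> k}\<close> show "k \<in> K_TJ (johnson_V n 1) (johnson_E n 1)"
    unfolding K_TJ_johnson_iff by blast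
qed

locale johnson_jump_pair = jump_pair a b I k for a b :: nat and I k +
  fixes n :: nat
  assumes U_sub: "insert a (insert b I) \<subseteq> {1..n}"
begin

lemma pair_nbrs_johnson: "pair_nbrs (johnson_V n k) = (\<lambda>y. U - {y}) ` I"
proof -
  have "U - {y} \<in> johnson_V n k" if "y \<in> I" for y
    using U_sub card_U_remove[OF that] unfolding johnson_V_def by blast
  then show ?thesis unfolding pair_nbrs_def by blast
qed

lemma core_nbrs_johnson: "core_nbrs (johnson_V n k) = (\<lambda>x. insert x I) ` ({1..n} - U)"
proof -
  have "insert x I \<in> johnson_V n k \<longleftrightarrow> x \<in> {1..n}" if "x \<notin> U" for x
    using U_sub card_insert_core[of x] that unfolding johnson_V_def by auto
  then show ?thesis unfolding core_nbrs_def by blast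
qed

lemma card_core_nbrs_johnson: "card (core_nbrs (johnson_V n k)) = n - k - 1"
proof -
  have "inj_on (\<lambda>x. insert x I) ({1..n} - U)"
    unfolding inj_on_def by blast
  then have "card (core_nbrs (johnson_V n k)) = card ({1..n} - U)"
    unfolding core_nbrs_johnson by (rule card_image)
  also have "\<dots> = n - k - 1"
    using card_Diff_subset[OF finite_subset[OF U_sub] U_sub] card_U by simp
  finally show ?thesis .
qed

lemma card_pair_nbrs_johnson: "card (pair_nbrs (johnson_V n k)) = k - 1"
  using card_pair_nbrs pair_nbrs_johnson unfolding pair_nbrs_def by blast

lemma card_common_closed_nbhd_johnson:
  assumes "C \<in> common_nbrs (jump_adj k) (johnson_V n k) (insert a I) (insert b I)"
  shows "card (common_closed_nbhd (jump_adj k) (johnson_V n k) (insert a I) (insert b I) C)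
         \<in> {k - 1, n - k - 1}"
proof -
  have W: "\<forall>D\<in>johnson_V n k. card D = k" by (simp add: johnson_V_def)
  from assms consider "C \<in> core_nbrs (johnson_V n k)" | "C \<in> pair_nbrs (johnson_V n k)"
    unfolding common_nbrs_eq[OF W] by blast
  then show ?thesis
  proof cases
    case 1
    then show ?thesis
      using common_closed_nbhd_core[OF W] card_core_nbrs_johnson by simp
  next
    case 2
    then show ?thesis
      using common_closed_nbhd_pair[OF W] card_pair_nbrs_johnson by simp
  qed
qed

end

lemma edge_class_sizes_johnson_subset:
  assumes "1 \<le> r"
  shows "edge_class_sizes (jump_adj r) (johnson_V n r) \<subseteq> {r - 1, n - r - 1}"
proof
  let ?W = "johnson_V n r"
  fix m assume "m \<in> edge_class_sizes (jump_adj r) ?W"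
  then obtain A B C where AB: "A \<in> ?W" "B \<in> ?W" "jump_adj r A B"
    and C: "C \<in> common_nbrs (jump_adj r) ?W A B"
    and m: "m = card (common_closed_nbhd (jump_adj r) ?W A B C)"
    unfolding edge_class_sizes_def by blast
  have "card A = r" "card B = r" using AB(1,2) by (simp_all add: johnson_V_def)
  then obtain a b I where pair: "jump_pair a b I r" and A: "A = insert a I" and B: "B = insert b I"
    using obtain_jump_pair[OF AB(3)] assms by blast
  have "insert a (insert b I) \<subseteq> {1..n}"
    using AB(1,2) unfolding A B johnson_V_def by simp
  with pair interpret johnson_jump_pair a b I r n
    by (intro johnson_jump_pair.intro johnson_jump_pair_axioms.intro)
  show "m \<in> {r - 1, n - r - 1}"
    using card_common_closed_nbhd_johnson C m unfolding A B by blast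
qed

lemma edge_class_sizes_johnson:
  assumes "2 \<le> r" "r + 2 \<le> n"
  shows "edge_class_sizes (jump_adj r) (johnson_V n r) = {r - 1, n - r - 1}"
proof (rule antisym)
  show "edge_class_sizes (jump_adj r) (johnson_V n r) \<subseteq> {r - 1, n - r - 1}"
    using edge_class_sizes_johnson_subset assms(1) by simp
  let ?W = "johnson_V n r" and ?I = "{1..<r}"
  have "jump_pair r (r + 1) ?I r"
    using assms(1) by unfold_locales auto
  moreover have "insert r (insert (r + 1) ?I) \<subseteq> {1..n}"
    using assms by auto
  ultimately interpret johnson_jump_pair r "r + 1" ?I r n
    by (intro johnson_jump_pair.intro johnson_jump_pair_axioms.intro)
  have card_W: "\<forall>D\<in>?W. card D = r" by (simp add: johnson_V_def)
  have AB: "insert r ?I \<in> ?W" "insert (r + 1) ?I \<in> ?W" "jump_adj r (insert r ?I) (insert (r + 1) ?I)"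
    using U_sub card_insert_core jump_adj_core unfolding johnson_V_def by auto
  have "r + 2 \<in> {1..n} - U" "1 \<in> ?I" using assms by auto
  then have core: "insert (r + 2) ?I \<in> core_nbrs ?W" and pair: "U - {1} \<in> pair_nbrs ?W"
    unfolding core_nbrs_johnson pair_nbrs_johnson by (blast, blast)
  then have nonclique: "\<not> rel_clique (jump_adj r) (common_nbrs (jump_adj r) ?W (insert r ?I) (insert (r + 1) ?I))"
    using rel_clique_common_nbrs_iff[OF card_W] by blast
  have "insert (r + 2) ?I \<in> common_nbrs (jump_adj r) ?W (insert r ?I) (insert (r + 1) ?I)"
    "U - {1} \<in> common_nbrs (jump_adj r) ?W (insert r ?I) (insert (r + 1) ?I)"
    unfolding common_nbrs_eq[OF card_W] using core pair by blast+
  from this[THEN edge_class_sizesI[OF AB nonclique]]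
  show "{r - 1, n - r - 1} \<subseteq> edge_class_sizes (jump_adj r) ?W"
    using common_closed_nbhd_core[OF card_W core] common_closed_nbhd_pair[OF card_W pair]
      card_core_nbrs_johnson card_pair_nbrs_johnson by simp
qed

lemma K_TJ_johnson:
  assumes "2 \<le> r" "r + 2 \<le> n"
  shows "K_TJ (johnson_V n r) (johnson_E n r) = {r, n - r}"
proof (intro antisym subsetI)
  fix k assume "k \<in> K_TJ (johnson_V n r) (johnson_E n r)"
  then obtain V :: "nat set" and E f where k: "1 \<le> k"
    and iso: "rel_iso f (cliques V E k) (jump_adj k) (johnson_V n r) (jump_adj r)"
    unfolding K_TJ_johnson_iff by blast
  have "edge_class_sizes (jump_adj k) (cliques V E k) = {r - 1, n - r - 1}"
    using rel_iso_edge_class_sizes[OF iso] edge_class_sizes_johnson[OF assms] by (rule trans)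
  then have "k - 1 \<in> {r - 1, n - r - 1}"
    using edge_class_sizes_cliques[OF k, of V E] by blast
  then show "k \<in> {r, n - r}"
    using k assms by auto
next
  have "r \<in> K_TJ (johnson_V n r) (johnson_E n r)"
    using self_in_K_TJ_johnson assms by simp
  moreover have "n - r \<in> K_TJ (johnson_V n r) (johnson_E n r)"
    using self_in_K_TJ_johnson[of "n - r" n] K_TJ_johnson_complement[of r n] assms by simp
  ultimately show "k \<in> K_TJ (johnson_V n r) (johnson_E n r)" if "k \<in> {r, n - r}" for k
    using that by blast
qed

theorem theorem4p14:
  fixes n r s :: nat
  assumes "n \<ge> 2" and "1 \<le> r" and "r \<le> n - 1"
    and "s = min r (n - r)"
  shows "K_TJ (johnson_V n r) (johnson_E n r) =
           (if s = 1 then {k. k \<ge> 1}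
            else if n = 2 * s then {s}
            else {s, n - s})"
proof -
  have s: "1 \<le> s" "s + s \<le> n" using assms by auto
  have "K_TJ (johnson_V n r) (johnson_E n r) = K_TJ (johnson_V n s) (johnson_E n s)"
    using K_TJ_johnson_complement[of r n] assms by (auto simp: min_def)
  also have "\<dots> = (if s = 1 then {k. k \<ge> 1} else if n = 2 * s then {s} else {s, n - s})"
  proof (cases "s = 1")
    case True
    then show ?thesis using K_TJ_johnson_1 by simp
  next
    case False
    then show ?thesis using K_TJ_johnson[of s n] s by auto
  qed
  finally show ?thesis .
qed

end
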